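(* Let $P\subset\mathbb R^d$ be a $d$-polytope and $S$ a simplex facet of $P$ in bounded position. Then for any two disjoint sets $\mathcal F,\mathcal N\subseteq\operatorname{adj}(S)$ the set $V_S(\mathcal F,\mathcal N;P)$ is nonempty.
   Context: For a facet $F$ of $P$ let $H_F=\{x:\langle x,a_F\rangle=\ell_F\}$ be its affine hull, oriented so that $P\subseteq\{x:\langle x,a_F\rangle\geq\ell_F\}$; $H_F^+=\{x:\langle x,a_F\rangle>\ell_F\}$, $H_F^-=\{x:\langle x,a_F\rangle<\ell_F\}$. Two facets are adjacent if they share a ridge; $\operatorname{adj}(S)$ is the set of facets adjacent to $S$. A simplex facet is a facet combinatorially equivalent to a $(d-1)$-simplex. $S$ is in bounded position if for every set of $d$ facets in $\operatorname{adj}(S)$ their hyperplanes meet in a point of $H_S^-$. $V_S(\mathcal F,\mathcal N;P)$ is the set of points lying in $H_F^-$ for $F\in\mathcal N\cup\{S\}$, in $H_F$ for $F\in\mathcal F$, and in $H_F^+$ for all other facets $F$ of $P$. *)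

theory Defs
  imports "HOL-Analysis.Analysis"
begin

definition ridge_of :: "'a::euclidean_space set \<Rightarrow> 'a set \<Rightarrow> bool" where
  "ridge_of R P \<longleftrightarrow> R face_of P \<and> aff_dim R = aff_dim P - 2"

definition adjacent_facets :: "'a::euclidean_space set \<Rightarrow> 'a set \<Rightarrow> 'a set \<Rightarrow> bool" where
  "adjacent_facets P F G \<longleftrightarrow> F facet_of P \<and> G facet_of P \<and> F \<noteq> G \<and>
     (\<exists>R. ridge_of R P \<and> R \<subseteq> F \<and> R \<subseteq> G)"

definition adj :: "'a::euclidean_space set \<Rightarrow> 'a set \<Rightarrow> 'a set set" where
  "adj P S = {F. adjacent_facets P F S}"

definition comb_equiv :: "'a::euclidean_space set \<Rightarrow> 'b::euclidean_space set \<Rightarrow> bool" where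
  "comb_equiv P Q \<longleftrightarrow> (\<exists>f. bij_betw f {F. F face_of P} {G. G face_of Q} \<and>
     (\<forall>F G. F face_of P \<longrightarrow> G face_of P \<longrightarrow> (F \<subseteq> G \<longleftrightarrow> f F \<subseteq> f G)))"

definition simplex_facet :: "'a::euclidean_space set \<Rightarrow> 'a set \<Rightarrow> bool" where
  "simplex_facet P S \<longleftrightarrow> S facet_of P \<and>
     (\<exists>T::'a set. (int DIM('a) - 1) simplex T \<and> comb_equiv S T)"

definition facet_ineq :: "'a::euclidean_space set \<Rightarrow> 'a set \<Rightarrow> 'a \<Rightarrow> real \<Rightarrow> bool" where
  "facet_ineq P F a l \<longleftrightarrow> a \<noteq> 0 \<and> affine hull F = {x. a \<bullet> x = l} \<and> P \<subseteq> {x. a \<bullet> x \<ge> l}"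

definition Hyp :: "'a::euclidean_space set \<Rightarrow> 'a set" where
  "Hyp F = affine hull F"

definition Hplus :: "'a::euclidean_space set \<Rightarrow> 'a set \<Rightarrow> 'a set" where
  "Hplus P F = {x. \<exists>a l. facet_ineq P F a l \<and> a \<bullet> x > l}"

definition Hminus :: "'a::euclidean_space set \<Rightarrow> 'a set \<Rightarrow> 'a set" where
  "Hminus P F = {x. \<exists>a l. facet_ineq P F a l \<and> a \<bullet> x < l}"

definition bounded_position :: "'a::euclidean_space set \<Rightarrow> 'a set \<Rightarrow> bool" where
  "bounded_position P S \<longleftrightarrow>
     (\<forall>\<G>. \<G> \<subseteq> adj P S \<and> card \<G> = DIM('a) \<longrightarrow>
        (\<exists>x. (\<Inter>F\<in>\<G>. Hyp F) = {x} \<and> x \<in> Hminus P S))"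

definition V_S :: "'a::euclidean_space set \<Rightarrow> 'a set set \<Rightarrow> 'a set set \<Rightarrow> 'a set \<Rightarrow> 'a set" where
  "V_S S \<F> \<N> P = {x.
     (\<forall>F\<in>\<N> \<union> {S}. x \<in> Hminus P F) \<and>
     (\<forall>F\<in>\<F>. x \<in> Hyp F) \<and>
     (\<forall>F. F facet_of P \<and> F \<notin> \<N> \<union> {S} \<union> \<F> \<longrightarrow> x \<in> Hplus P F)}"

end

theory Submission
  imports Defs
begin

(*
  The facets R of the simplex facet S are d = DIM('a) in number, and each has an opposite
  vertex p_R of S lying in all the others; each R also lies in a facet F_R <> S of P, and then
  F_R meets S exactly in R.  By bounded position the hyperplanes of the F_R meet in a single
  point x0 beneath S.  The points x0 and p_R form an affine basis in which the facet functionals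
  of S and of the F_R are multiples of the barycentric coordinates, so every affine functional
  expands explicitly in them.  If the inequality of some other facet G failed at x0, all
  coefficients of its expansion would be nonnegative and G would lie in one of the other facet
  hyperplanes; so every other facet holds strictly at x0.  The same expansion shows that no
  third facet contains R, hence adj(S) consists of the F_R.  Finally x0 + e W, where the
  values of the F_R-functionals on W are prescribed in {-1, 0, 1} and e > 0 is small, is a
  point of V_S.
*)

section \<open>Facet inequalities of full-dimensional polytopes\<close>

lemma facet_subset_affine_hull_eq:
  fixes P :: "'a::euclidean_space set"
  assumes "convex P" "F facet_of P" "G facet_of P" "G \<subseteq> affine hull F"
  shows "G = F"
proof (rule ccontr)
  assume "G \<noteq> F"
  have "G \<subseteq> F"
    using assms face_of_imp_eq_affine_Int[of P F] facet_of_imp_face_of facet_of_imp_subset by blast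
  then have "G face_of F"
    using assms face_of_subset facet_of_imp_face_of facet_of_imp_subset by blast
  then have "aff_dim G < aff_dim F"
    using \<open>G \<noteq> F\<close> assms(2) face_of_aff_dim_lt face_of_imp_convex facet_of_imp_face_of by blast
  then show False
    using assms(2,3) by (simp add: facet_of_def)
qed

lemma facet_ineq_exists:
  fixes P :: "'a::euclidean_space set"
  assumes "polyhedron P" "aff_dim P = DIM('a)" "F facet_of P"
  obtains a l where "facet_ineq P F a l"
proof -
  obtain a b where ab: "a \<noteq> 0" "P \<subseteq> {x. a \<bullet> x \<le> b}" "F = P \<inter> {x. a \<bullet> x = b}"
    using facet_of_polyhedron assms(1,3) by blast
  have "F \<noteq> {}" "aff_dim F = DIM('a) - 1"
    using assms(2,3) by (auto simp: facet_of_def)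
  then have "affine hull F = {x. a \<bullet> x = b}"
    using ab by (intro affine_dim_equal) (auto simp: affine_hyperplane hull_minimal)
  then have "facet_ineq P F (-a) (-b)"
    using ab by (auto simp: facet_ineq_def)
  then show thesis ..
qed

lemma hyperplane_eq_imp_proportional:
  fixes a a' :: "'a::real_inner"
  assumes "a \<noteq> 0" "{x. a \<bullet> x = l} = {x. a' \<bullet> x = l'}"
  shows "\<exists>c. a' = c *\<^sub>R a \<and> l' = c * l"
proof -
  define z where "z = (l / (a \<bullet> a)) *\<^sub>R a"
  have "a \<bullet> z = l"
    using assms(1) by (simp add: z_def)
  then have z: "a' \<bullet> z = l'"
    using assms(2) by blast
  have perp: "a' \<bullet> v = 0" if "a \<bullet> v = 0" for v
  proof -
    have "z + v \<in> {x. a \<bullet> x = l}"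
      using \<open>a \<bullet> z = l\<close> that by (simp add: inner_add_right)
    then have "a' \<bullet> (z + v) = l'"
      using assms(2) by blast
    then show ?thesis
      using z by (simp add: inner_add_right)
  qed
  define c where "c = (a' \<bullet> a) / (a \<bullet> a)"
  define v where "v = a' - c *\<^sub>R a"
  have "a \<bullet> v = 0"
    using assms(1) by (simp add: v_def c_def inner_diff_right inner_commute)
  then have "v \<bullet> v = 0"
    using perp[of v] by (simp add: v_def inner_diff_left)
  then have "a' = c *\<^sub>R a"
    by (simp add: v_def)
  moreover have "l' = c * l"
    using z \<open>a \<bullet> z = l\<close> calculation by simp
  ultimately show ?thesis
    by blast
qed

lemma facet_ineq_unique:
  fixes P :: "'a::euclidean_space set"
  assumes "aff_dim P = DIM('a)" "facet_ineq P F a l" "facet_ineq P F a' l'"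
  shows "\<exists>c>0. a' = c *\<^sub>R a \<and> l' = c * l"
proof -
  obtain c where c: "a' = c *\<^sub>R a" "l' = c * l"
    using assms(2,3) hyperplane_eq_imp_proportional[of a l a' l'] by (auto simp: facet_ineq_def)
  have "\<not> P \<subseteq> {x. a \<bullet> x = l}"
    using assms(1,2) aff_dim_subset[of P "{x. a \<bullet> x = l}"] by (auto simp: facet_ineq_def)
  then obtain y where "y \<in> P" "a \<bullet> y > l"
    using assms(2) by (force simp: facet_ineq_def)
  moreover have "a' \<bullet> y \<ge> l'"
    using assms(3) \<open>y \<in> P\<close> by (auto simp: facet_ineq_def)
  ultimately have "c * (a \<bullet> y - l) \<ge> 0" "a \<bullet> y - l > 0"
    using c by (simp_all add: right_diff_distrib)
  then have "c \<ge> 0"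
    by (simp add: zero_le_mult_iff)
  moreover have "c \<noteq> 0"
    using assms(3) c by (auto simp: facet_ineq_def)
  ultimately have "c > 0"
    by simp
  with c show ?thesis
    by blast
qed

lemma Hminus_eq:
  fixes P :: "'a::euclidean_space set"
  assumes "aff_dim P = DIM('a)" "facet_ineq P F a l"
  shows "Hminus P F = {x. a \<bullet> x < l}"
proof -
  have "a' \<bullet> x < l' \<longleftrightarrow> a \<bullet> x < l" if "facet_ineq P F a' l'" for a' l' x
    using facet_ineq_unique[OF assms that] by (metis inner_scaleR_left mult_less_cancel_left_pos)
  then show ?thesis
    unfolding Hminus_def using assms(2) by blast
qed

lemma Hplus_eq:
  fixes P :: "'a::euclidean_space set"
  assumes "aff_dim P = DIM('a)" "facet_ineq P F a l"
  shows "Hplus P F = {x. a \<bullet> x > l}"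
proof -
  have "a' \<bullet> x > l' \<longleftrightarrow> a \<bullet> x > l" if "facet_ineq P F a' l'" for a' l' x
    using facet_ineq_unique[OF assms that] by (metis inner_scaleR_left mult_less_cancel_left_pos)
  then show ?thesis
    unfolding Hplus_def using assms(2) by blast
qed

section \<open>Coatoms of the face lattice\<close>

text \<open>Coatoms rather than facets: when \<open>S\<close> is a point (\<open>d = 1\<close>) its only coatom is the
  empty face, which is then a ridge of \<open>P\<close>.\<close>
definition face_coatoms :: "'a::euclidean_space set \<Rightarrow> 'a set set" where
  "face_coatoms S =
     {R. R face_of S \<and> R \<noteq> S \<and> (\<forall>R'. R' face_of S \<and> R \<subseteq> R' \<longrightarrow> R' = R \<or> R' = S)}"

lemma face_coatoms_aff_dim:
  fixes S :: "'a::euclidean_space set"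
  assumes "polytope S" "S \<noteq> {}" "R \<in> face_coatoms S"
  shows "aff_dim R = aff_dim S - 1"
proof -
  have R: "R face_of S" "R \<noteq> S"
    and max: "\<And>R'. R' face_of S \<Longrightarrow> R \<subseteq> R' \<Longrightarrow> R' = R \<or> R' = S"
    using assms(3) by (auto simp: face_coatoms_def)
  show ?thesis
  proof (cases "R = {}")
    case True
    obtain v where "v extreme_point_of S"
      using extreme_point_exists_convex assms polytope_imp_compact polytope_imp_convex by blast
    then have "{v} face_of S"
      by (simp add: face_of_singleton)
    then have "{v} = S"
      using max True by blast
    then have "aff_dim S = 0"
      by (simp flip: \<open>{v} = S\<close>)
    with True show ?thesis
      by simp
  next
    case False
    then obtain F where "F facet_of S" "R \<subseteq> F"
      using face_of_polyhedron_subset_facet[OF polytope_imp_polyhedron[OF assms(1)] R(1) False R(2)]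
      by blast
    then have "F = R"
      using max[of F] facet_of_imp_face_of facet_of_irrefl by blast
    with \<open>F facet_of S\<close> show ?thesis
      by (simp add: facet_of_def)
  qed
qed

lemma face_coatomsI:
  fixes S :: "'a::euclidean_space set"
  assumes "convex S" "R face_of S" "aff_dim R = aff_dim S - 1"
  shows "R \<in> face_coatoms S"
proof -
  have "R' = R \<or> R' = S" if R': "R' face_of S" "R \<subseteq> R'" for R'
  proof (rule ccontr)
    assume "\<not> (R' = R \<or> R' = S)"
    moreover have "R face_of R'"
      using face_of_subset[OF assms(2) R'(2) face_of_imp_subset[OF R'(1)]] .
    ultimately have "aff_dim R < aff_dim R'" "aff_dim R' < aff_dim S"
      using face_of_aff_dim_lt face_of_imp_convex R'(1) assms(1) by metis+
    with assms(3) show False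
      by simp
  qed
  with assms(2,3) show ?thesis
    by (auto simp: face_coatoms_def)
qed

lemma convex_hull_subset_affine_independent:
  fixes V :: "'a::euclidean_space set"
  assumes "\<not> affine_dependent V" "c \<subseteq> V" "c' \<subseteq> V"
  shows "convex hull c \<subseteq> convex hull c' \<longleftrightarrow> c \<subseteq> c'"
proof
  assume hull: "convex hull c \<subseteq> convex hull c'"
  show "c \<subseteq> c'"
  proof
    fix x assume "x \<in> c"
    show "x \<in> c'"
    proof (rule ccontr)
      assume "x \<notin> c'"
      have "x \<in> convex hull c'"
        using hull hull_inc[OF \<open>x \<in> c\<close>] by blast
      also have "\<dots> \<subseteq> affine hull (V - {x})"
        using \<open>x \<notin> c'\<close> assms(3) convex_hull_subset_affine_hull hull_mono
        by (metis Diff_empty subset_Diff_insert subset_trans)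
      finally show False
        using assms(1,2) \<open>x \<in> c\<close> by (auto simp: affine_dependent_def)
    qed
  qed
qed (rule hull_mono)

lemma convex_hull_Diff_singleton_face_coatom:
  fixes V :: "'a::euclidean_space set"
  assumes indep: "\<not> affine_dependent V" and "v \<in> V"
  shows "convex hull (V - {v}) \<in> face_coatoms (convex hull V)"
proof -
  note faces = face_of_convex_hull_affine_independent[OF indep]
  note le = convex_hull_subset_affine_independent[OF indep]
  have "Z = convex hull (V - {v}) \<or> Z = convex hull V"
    if Z: "Z face_of convex hull V" "convex hull (V - {v}) \<subseteq> Z" for Z
  proof -
    obtain c where c: "c \<subseteq> V" "Z = convex hull c"
      using faces Z(1) by blast
    then have "V - {v} \<subseteq> c"
      using le[of "V - {v}" c] Z(2) by simp
    then have "c = V - {v} \<or> c = V"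
      using c(1) by (cases "v \<in> c") auto
    then show ?thesis
      using c(2) by blast
  qed
  moreover have "convex hull (V - {v}) \<noteq> convex hull V"
    using le[of V "V - {v}"] assms(2) by blast
  ultimately show ?thesis
    using faces by (auto simp: face_coatoms_def)
qed

lemma face_coatoms_convex_hull_affine_independent:
  fixes V :: "'a::euclidean_space set"
  assumes indep: "\<not> affine_dependent V"
  shows "face_coatoms (convex hull V) = (\<lambda>v. convex hull (V - {v})) ` V"
proof (intro equalityI subsetI)
  fix X assume X: "X \<in> face_coatoms (convex hull V)"
  then have "X face_of convex hull V" "X \<noteq> convex hull V"
    by (auto simp: face_coatoms_def)
  then obtain c where c: "c \<subseteq> V" "X = convex hull c" "c \<noteq> V"
    using face_of_convex_hull_affine_independent[OF indep] by blast
  then obtain v where v: "v \<in> V" "c \<subseteq> V - {v}"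
    by blast
  have "X \<subseteq> convex hull (V - {v})"
    using c(2) v(2) by (simp add: hull_mono)
  then have "X = convex hull (V - {v})"
    using X convex_hull_Diff_singleton_face_coatom[OF indep v(1)] by (auto simp: face_coatoms_def)
  with v(1) show "X \<in> (\<lambda>v. convex hull (V - {v})) ` V"
    by blast
next
  fix X assume "X \<in> (\<lambda>v. convex hull (V - {v})) ` V"
  then show "X \<in> face_coatoms (convex hull V)"
    using convex_hull_Diff_singleton_face_coatom[OF indep] by blast
qed

lemma inj_on_convex_hull_Diff_singleton:
  fixes V :: "'a::euclidean_space set"
  assumes "\<not> affine_dependent V"
  shows "inj_on (\<lambda>v. convex hull (V - {v})) V"
proof (rule inj_onI)
  fix v w assume "v \<in> V" "w \<in> V" "convex hull (V - {v}) = convex hull (V - {w})"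
  then have "V - {v} \<subseteq> V - {w}"
    using convex_hull_subset_affine_independent[OF assms, of "V - {v}" "V - {w}"] by auto
  with \<open>v \<in> V\<close> \<open>w \<in> V\<close> show "v = w"
    by auto
qed

lemma face_lattice_iso_top_bot:
  fixes S :: "'a::euclidean_space set" and T :: "'b::euclidean_space set"
  assumes bij: "bij_betw f {F. F face_of S} {G. G face_of T}"
    and mono: "\<And>F G. F face_of S \<Longrightarrow> G face_of S \<Longrightarrow> F \<subseteq> G \<longleftrightarrow> f F \<subseteq> f G"
    and "convex S" "convex T"
  shows "f S = T" and "f {} = {}"
proof -
  have onto: "G face_of T \<Longrightarrow> \<exists>F. F face_of S \<and> f F = G" for G
    using bij unfolding bij_betw_def by (metis (mono_tags, lifting) imageE mem_Collect_eq)
  have S: "S face_of S" and T: "T face_of T"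
    using assms(3,4) by (simp_all add: face_of_refl)
  obtain X where X: "X face_of S" "f X = T"
    using onto[OF T] by blast
  then have "T \<subseteq> f S"
    using mono[OF X(1) S] face_of_imp_subset by blast
  moreover have "f S \<subseteq> T"
    using bij S face_of_imp_subset by (auto simp: bij_betw_def)
  ultimately show "f S = T"
    by blast
  show "f {} = {}"
    using onto[OF empty_face_of] mono[OF empty_face_of] by blast
qed

lemma face_lattice_iso_coatoms:
  fixes S :: "'a::euclidean_space set" and T :: "'b::euclidean_space set"
  assumes bij: "bij_betw f {F. F face_of S} {G. G face_of T}"
    and mono: "\<And>F G. F face_of S \<Longrightarrow> G face_of S \<Longrightarrow> F \<subseteq> G \<longleftrightarrow> f F \<subseteq> f G"
    and "convex S" "convex T"
  shows "f ` face_coatoms S = face_coatoms T"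
proof (intro equalityI subsetI)
  have to: "F face_of S \<Longrightarrow> f F face_of T" for F
    using bij by (auto simp: bij_betw_def)
  have onto: "G face_of T \<Longrightarrow> \<exists>F. F face_of S \<and> f F = G" for G
    using bij unfolding bij_betw_def by (metis (mono_tags, lifting) imageE mem_Collect_eq)
  have inj: "F face_of S \<Longrightarrow> F' face_of S \<Longrightarrow> f F = f F' \<Longrightarrow> F = F'" for F F'
    using mono by blast
  have S: "S face_of S"
    using assms(3) by (simp add: face_of_refl)
  note top = face_lattice_iso_top_bot(1)[OF assms]
  fix G
  show "G \<in> face_coatoms T" if G: "G \<in> f ` face_coatoms S"
  proof -
    obtain R where R: "R face_of S" "R \<noteq> S" "G = f R"
      and max: "\<And>R'. R' face_of S \<Longrightarrow> R \<subseteq> R' \<Longrightarrow> R' = R \<or> R' = S"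
      using G by (auto simp: face_coatoms_def)
    have "G' = G \<or> G' = T" if "G' face_of T" "G \<subseteq> G'" for G'
      using onto[OF that(1)] max mono[OF R(1)] that(2) R(3) top by metis
    then show ?thesis
      using R to inj[OF R(1) S] top by (auto simp: face_coatoms_def)
  qed
  show "G \<in> f ` face_coatoms S" if G: "G \<in> face_coatoms T"
  proof -
    have "G face_of T"
      using G by (simp add: face_coatoms_def)
    then obtain R where R: "R face_of S" "f R = G"
      using onto by blast
    have "R' = R \<or> R' = S" if "R' face_of S" "R \<subseteq> R'" for R'
      using G to[OF that(1)] mono[OF R(1) that(1)] that(2) R(2) top inj[OF that(1)] R(1) S
      by (auto simp: face_coatoms_def)
    then have "R \<in> face_coatoms S"
      using R G top by (auto simp: face_coatoms_def)
    with R show ?thesis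
      by blast
  qed
qed

lemma comb_equiv_simplex_card_face_coatoms:
  fixes S :: "'a::euclidean_space set" and T :: "'b::euclidean_space set"
  assumes "comb_equiv S T" "n simplex T" "convex S"
  shows "card (face_coatoms S) = nat (n + 1)"
proof -
  obtain f where bij: "bij_betw f {F. F face_of S} {G. G face_of T}"
    and mono: "\<And>F G. F face_of S \<Longrightarrow> G face_of S \<Longrightarrow> F \<subseteq> G \<longleftrightarrow> f F \<subseteq> f G"
    using assms(1) by (auto simp: comb_equiv_def)
  obtain V where indep: "\<not> affine_dependent V" and "int (card V) = n + 1" and T: "T = convex hull V"
    using assms(2) by (auto simp: simplex_def)
  have "f ` face_coatoms S = (\<lambda>v. convex hull (V - {v})) ` V"
    using face_lattice_iso_coatoms[OF bij mono assms(3)] face_coatoms_convex_hull_affine_independent[OF indep] T by simp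
  moreover have "inj_on f (face_coatoms S)"
    by (rule inj_on_subset[OF bij_betw_imp_inj_on[OF bij]]) (auto simp: face_coatoms_def)
  ultimately have "card (face_coatoms S) = card V"
    using inj_on_convex_hull_Diff_singleton[OF indep] by (metis card_image)
  with \<open>int (card V) = n + 1\<close> show ?thesis
    by simp
qed

lemma comb_equiv_simplex_opposite_vertex:
  fixes S :: "'a::euclidean_space set" and T :: "'b::euclidean_space set"
  assumes "comb_equiv S T" "n simplex T" "convex S" "R0 \<in> face_coatoms S"
  shows "\<exists>q\<in>S. \<forall>R\<in>face_coatoms S - {R0}. q \<in> R"
proof -
  obtain f where bij: "bij_betw f {F. F face_of S} {G. G face_of T}"
    and mono: "\<And>F G. F face_of S \<Longrightarrow> G face_of S \<Longrightarrow> F \<subseteq> G \<longleftrightarrow> f F \<subseteq> f G"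
    using assms(1) by (auto simp: comb_equiv_def)
  obtain V where indep: "\<not> affine_dependent V" and T: "T = convex hull V"
    using assms(2) by (auto simp: simplex_def)
  have image: "f ` face_coatoms S = (\<lambda>v. convex hull (V - {v})) ` V"
    using face_lattice_iso_coatoms[OF bij mono assms(3)]
      face_coatoms_convex_hull_affine_independent[OF indep] T by simp
  have face: "R \<in> face_coatoms S \<Longrightarrow> R face_of S" for R
    by (simp add: face_coatoms_def)
  have coatom_image: "f R \<in> (\<lambda>v. convex hull (V - {v})) ` V" if "R \<in> face_coatoms S" for R
    unfolding image[symmetric] using that by (rule imageI)
  obtain v0 where v0: "v0 \<in> V" "f R0 = convex hull (V - {v0})"
    using coatom_image[OF assms(4)] by blast
  have "{v0} face_of T"
    using extreme_point_of_convex_hull_affine_independent[OF indep] v0(1) T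
    by (simp add: face_of_singleton)
  then have "{v0} \<in> f ` {F. F face_of S}"
    using bij_betw_imp_surj_on[OF bij] by blast
  then obtain Z where Z: "Z face_of S" "f Z = {v0}"
    by blast
  moreover have "f {} = {}"
    using face_lattice_iso_top_bot(2)[OF bij mono assms(3)] T by simp
  ultimately have "Z \<noteq> {}"
    by force
  then obtain q where "q \<in> Z"
    by blast
  have "Z \<subseteq> R" if R: "R \<in> face_coatoms S - {R0}" for R
  proof -
    obtain v where v: "v \<in> V" "f R = convex hull (V - {v})"
      using coatom_image R by blast
    have "f R \<noteq> f R0"
      using R mono[OF face face, of R R0] mono[OF face face, of R0 R] assms(4) by blast
    then have "v0 \<in> V - {v}"
      using v(2) v0 by auto
    then have "{v0} \<subseteq> f R"
      using v(2) by (simp add: hull_inc)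
    then show "Z \<subseteq> R"
      using mono[OF Z(1) face] Z(2) R by blast
  qed
  then show ?thesis
    using \<open>q \<in> Z\<close> Z(1) face_of_imp_subset by blast
qed

section \<open>Ridges in a facet and the adjacent facets\<close>

lemma polytope_other_extreme_point:
  fixes P :: "'a::euclidean_space set"
  assumes "polytope P" "aff_dim P > 0"
  obtains v where "v extreme_point_of P" "v \<noteq> x"
proof (rule ccontr)
  assume "\<not> thesis"
  with that have "{v. v extreme_point_of P} \<subseteq> {x}"
    by blast
  then have "convex hull {v. v extreme_point_of P} \<subseteq> {x}"
    by (metis convex_hull_singleton hull_mono)
  then have "P \<subseteq> {x}"
    using Krein_Milman_Minkowski[OF polytope_imp_compact[OF assms(1)] polytope_imp_convex[OF assms(1)]]
    by simp
  then show False
    using assms(2) aff_dim_subset[of P "{x}"] by simp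
qed

lemma adj_facetD: "F \<in> adj P S \<Longrightarrow> F facet_of P \<and> F \<noteq> S"
  by (simp add: adj_def adjacent_facets_def)

lemma ridge_in_second_facet:
  fixes P :: "'a::euclidean_space set"
  assumes "polytope P" "S facet_of P" "R face_of S" "aff_dim R = aff_dim S - 1"
  obtains F where "F facet_of P" "F \<noteq> S" "R \<subseteq> F"
proof (cases "R = {}")
  case True
  then have "aff_dim S = 0" "aff_dim P = 1"
    using assms(2,4) by (auto simp: facet_of_def)
  then obtain s where "S = {s}"
    using aff_dim_eq_0 by blast
  obtain v where v: "v extreme_point_of P" "v \<noteq> s"
    using polytope_other_extreme_point[OF assms(1), of s] \<open>aff_dim P = 1\<close> by auto
  then have "{v} facet_of P"
    using \<open>aff_dim P = 1\<close> by (simp add: facet_of_def face_of_singleton)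
  with v(2) \<open>S = {s}\<close> True show thesis
    using that by blast
next
  case False
  have "R face_of P"
    using assms(2,3) face_of_trans facet_of_imp_face_of by blast
  moreover have "R \<noteq> P"
    using assms(2,4) by (auto simp: facet_of_def)
  ultimately have R: "R = \<Inter>{F. F facet_of P \<and> R \<subseteq> F}"
    using face_of_polyhedron[OF polytope_imp_polyhedron[OF assms(1)]] False by blast
  show thesis
  proof (rule ccontr)
    assume "\<not> thesis"
    then have "{F. F facet_of P \<and> R \<subseteq> F} = {S}"
      using that assms(2,3) face_of_imp_subset by blast
    then have "R = S"
      using R by simp
    then show False
      using assms(4) by simp
  qed
qed

lemma face_coatom_of_facet:
  fixes P :: "'a::euclidean_space set"
  assumes "polytope P" "S facet_of P" "R \<in> face_coatoms S"
  shows "R face_of S" and "aff_dim R = aff_dim S - 1"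
proof -
  have "polytope S" "S \<noteq> {}"
    using face_of_polytope_polytope[OF assms(1) facet_of_imp_face_of[OF assms(2)]] assms(2)
    by (auto simp: facet_of_def)
  with assms(3) show "R face_of S" "aff_dim R = aff_dim S - 1"
    using face_coatoms_aff_dim by (auto simp: face_coatoms_def)
qed

lemma adjacent_facet_Int_face_coatom:
  fixes P :: "'a::euclidean_space set"
  assumes "convex P" "S facet_of P" "F \<in> adj P S"
  shows "F \<inter> S \<in> face_coatoms S"
proof -
  obtain R where F: "F facet_of P" "F \<noteq> S" and R: "ridge_of R P" "R \<subseteq> F" "R \<subseteq> S"
    using assms(3) by (auto simp: adj_def adjacent_facets_def)
  have "R face_of P"
    using R(1) by (simp add: ridge_of_def)
  then have "R face_of S"
    using face_of_subset R(3) facet_of_imp_subset[OF assms(2)] by blast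
  moreover have "aff_dim R = aff_dim S - 1"
    using R(1) assms(2) by (auto simp: ridge_of_def facet_of_def)
  ultimately have "R \<in> face_coatoms S"
    using face_coatomsI face_of_imp_convex facet_of_imp_face_of[OF assms(2)] by blast
  moreover have "F \<inter> S face_of S"
    using face_of_Int[OF facet_of_imp_face_of[OF F(1)] facet_of_imp_face_of[OF assms(2)]]
    by (meson face_of_subset facet_of_imp_subset assms(2) inf_le2)
  moreover have "F \<inter> S \<noteq> S"
  proof
    assume "F \<inter> S = S"
    then have "S \<subseteq> affine hull F"
      using hull_subset[of F affine] by blast
    then show False
      using facet_subset_affine_hull_eq[OF assms(1) F(1) assms(2)] F(2) by blast
  qed
  ultimately have "F \<inter> S = R"
    using R(2,3) by (auto simp: face_coatoms_def)
  with \<open>R \<in> face_coatoms S\<close> show ?thesis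
    by simp
qed

lemma adjacent_facetI:
  fixes P :: "'a::euclidean_space set"
  assumes "polytope P" "S facet_of P" "F facet_of P" "F \<noteq> S" "R \<in> face_coatoms S" "R \<subseteq> F"
  shows "F \<in> adj P S" and "F \<inter> S = R"
proof -
  have "R face_of S" "aff_dim R = aff_dim S - 1"
    using face_coatom_of_facet[OF assms(1,2,5)] by blast+
  then have "ridge_of R P"
    using assms(2) face_of_trans[OF _ facet_of_imp_face_of] by (auto simp: ridge_of_def facet_of_def)
  moreover have "R \<subseteq> S"
    using \<open>R face_of S\<close> face_of_imp_subset by blast
  ultimately have "adjacent_facets P F S"
    using assms(2-4,6) unfolding adjacent_facets_def by auto
  then show adj: "F \<in> adj P S"
    by (simp add: adj_def)
  have "R \<subseteq> F \<inter> S"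
    using assms(6) \<open>R face_of S\<close> face_of_imp_subset by blast
  moreover have "F \<inter> S face_of S" "F \<inter> S \<noteq> S"
    using adjacent_facet_Int_face_coatom[OF polytope_imp_convex[OF assms(1)] assms(2) adj]
    by (auto simp: face_coatoms_def)
  ultimately show "F \<inter> S = R"
    using assms(5) by (auto simp: face_coatoms_def)
qed

lemma face_coatom_adjacent_facet:
  fixes P :: "'a::euclidean_space set"
  assumes "polytope P" "S facet_of P" "R \<in> face_coatoms S"
  obtains F where "F \<in> adj P S" "F \<inter> S = R"
proof -
  obtain F where F: "F facet_of P" "F \<noteq> S" "R \<subseteq> F"
    using ridge_in_second_facet[OF assms(1,2) face_coatom_of_facet[OF assms]] by blast
  then show thesis
    using adjacent_facetI[OF assms(1,2) F(1,2) assms(3) F(3)] that by blast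
qed

lemma simplex_facet_coatoms:
  fixes P S :: "'a::euclidean_space set"
  assumes P: "polytope P" and "simplex_facet P S"
  obtains q \<tau> where "card (face_coatoms S) = DIM('a)"
    "\<And>R. R \<in> face_coatoms S \<Longrightarrow> q R \<in> S \<and> (\<forall>R'\<in>face_coatoms S - {R}. q R \<in> R')"
    "\<And>R. R \<in> face_coatoms S \<Longrightarrow> \<tau> R \<in> adj P S \<and> \<tau> R \<inter> S = R"
proof -
  obtain T :: "'a set" where S: "S facet_of P" and T: "(int DIM('a) - 1) simplex T" "comb_equiv S T"
    using assms(2) by (auto simp: simplex_facet_def)
  have "convex S"
    using face_of_imp_convex[OF facet_of_imp_face_of[OF S]] .
  have "\<forall>R\<in>face_coatoms S. \<exists>x\<in>S. \<forall>R'\<in>face_coatoms S - {R}. x \<in> R'"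
    using comb_equiv_simplex_opposite_vertex[OF T(2,1) \<open>convex S\<close>] by blast
  then obtain q where q: "\<forall>R\<in>face_coatoms S. q R \<in> S \<and> (\<forall>R'\<in>face_coatoms S - {R}. q R \<in> R')"
    by (metis (no_types) bchoice)
  have "\<forall>R\<in>face_coatoms S. \<exists>F. F \<in> adj P S \<and> F \<inter> S = R"
  proof
    fix R assume "R \<in> face_coatoms S"
    then obtain F where "F \<in> adj P S" "F \<inter> S = R"
      by (rule face_coatom_adjacent_facet[OF P S])
    then show "\<exists>F. F \<in> adj P S \<and> F \<inter> S = R"
      by blast
  qed
  then obtain \<tau> where \<tau>: "\<forall>R\<in>face_coatoms S. \<tau> R \<in> adj P S \<and> \<tau> R \<inter> S = R"
    by (metis (no_types) bchoice)
  have "card (face_coatoms S) = DIM('a)"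
    using comb_equiv_simplex_card_face_coatoms[OF T(2,1) \<open>convex S\<close>] by simp
  then show thesis
    by (rule that) (use q \<tau> in blast)+
qed

lemma simplex_facet_opposite_vertices:
  fixes P S :: "'a::euclidean_space set"
  assumes P: "polytope P" and S: "simplex_facet P S"
  obtains \<A> p where "\<A> \<subseteq> adj P S" "card \<A> = DIM('a)" "\<And>F. F \<in> \<A> \<Longrightarrow> p F \<in> S"
    "\<And>F F'. F \<in> \<A> \<Longrightarrow> F' \<in> \<A> \<Longrightarrow> F' \<noteq> F \<Longrightarrow> p F \<in> F'"
    "\<And>G. G \<in> adj P S \<Longrightarrow> \<exists>F\<in>\<A>. \<forall>F'\<in>\<A> - {F}. p F' \<in> G"
proof -
  define C where "C = face_coatoms S"
  obtain q \<tau> where card_C: "card C = DIM('a)"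
    and q: "\<And>R. R \<in> C \<Longrightarrow> q R \<in> S \<and> (\<forall>R'\<in>C - {R}. q R \<in> R')"
    and \<tau>: "\<And>R. R \<in> C \<Longrightarrow> \<tau> R \<in> adj P S \<and> \<tau> R \<inter> S = R"
    using simplex_facet_coatoms[OF P S] unfolding C_def by blast
  then have "inj_on \<tau> C"
    by (metis inj_onI)
  define p where "p F = q (F \<inter> S)" for F
  have p: "p (\<tau> R) = q R" if "R \<in> C" for R
    using \<tau> that by (simp add: p_def)
  show thesis
  proof (rule that[of "\<tau> ` C" p])
    show "\<tau> ` C \<subseteq> adj P S"
      using \<tau> by blast
    show "card (\<tau> ` C) = DIM('a)"
      using card_image[OF \<open>inj_on \<tau> C\<close>] card_C by simp
    show "p F \<in> S" if "F \<in> \<tau> ` C" for F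
      using that q p by auto
    show "p F \<in> F'" if FF': "F \<in> \<tau> ` C" "F' \<in> \<tau> ` C" "F' \<noteq> F" for F F'
    proof -
      obtain R R' where R: "R \<in> C" "R' \<in> C" "F = \<tau> R" "F' = \<tau> R'"
        using FF'(1,2) by blast
      then have "q R \<in> R'"
        using FF'(3) q by blast
      moreover have "R' \<subseteq> F'"
        using \<tau> R(2,4) by blast
      ultimately show ?thesis
        using p R(1,3) by auto
    qed
    show "\<exists>F\<in>\<tau> ` C. \<forall>F'\<in>\<tau> ` C - {F}. p F' \<in> G" if "G \<in> adj P S" for G
    proof
      have R: "G \<inter> S \<in> C"
        using adjacent_facet_Int_face_coatom[OF polytope_imp_convex[OF P] _ that] S
        by (simp add: C_def simplex_facet_def)
      then show "\<tau> (G \<inter> S) \<in> \<tau> ` C"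
        by blast
      show "\<forall>F'\<in>\<tau> ` C - {\<tau> (G \<inter> S)}. p F' \<in> G"
      proof
        fix F' assume "F' \<in> \<tau> ` C - {\<tau> (G \<inter> S)}"
        then obtain R' where "R' \<in> C" "R' \<noteq> G \<inter> S" "F' = \<tau> R'"
          by blast
        then have "q R' \<in> G \<inter> S"
          using R q by blast
        then show "p F' \<in> G"
          using p \<open>R' \<in> C\<close> \<open>F' = \<tau> R'\<close> by simp
      qed
    qed
  qed
qed

section \<open>Barycentric coordinates at an apex\<close>

lemma apex_coordinates:
  fixes x0 y :: "'a::real_inner" and a p :: "'i \<Rightarrow> 'a" and l :: "'i \<Rightarrow> real"
  assumes "finite C"
    and apex: "\<And>y. (\<forall>i\<in>C. a i \<bullet> y = l i) \<longleftrightarrow> y = x0"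
    and off: "\<And>i j. i \<in> C \<Longrightarrow> j \<in> C \<Longrightarrow> j \<noteq> i \<Longrightarrow> a j \<bullet> p i = l j"
    and diag: "\<And>i. i \<in> C \<Longrightarrow> a i \<bullet> p i \<noteq> l i"
  shows "y = x0 + (\<Sum>i\<in>C. ((a i \<bullet> y - l i) / (a i \<bullet> p i - l i)) *\<^sub>R (p i - x0))"
proof -
  define z where "z = y - (\<Sum>i\<in>C. ((a i \<bullet> y - l i) / (a i \<bullet> p i - l i)) *\<^sub>R (p i - x0))"
  have "a j \<bullet> z = l j" if j: "j \<in> C" for j
  proof -
    have "a j \<bullet> x0 = l j"
      using apex j by blast
    then have "((a i \<bullet> y - l i) / (a i \<bullet> p i - l i)) * (a j \<bullet> (p i - x0))
        = (if i = j then a j \<bullet> y - l j else 0)" if "i \<in> C" for i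
      using off[OF that j] diag[OF j] by (simp add: inner_diff_right)
    then have "(\<Sum>i\<in>C. ((a i \<bullet> y - l i) / (a i \<bullet> p i - l i)) * (a j \<bullet> (p i - x0))) = a j \<bullet> y - l j"
      using assms(1) j by (simp cong: sum.cong)
    then show ?thesis
      by (simp add: z_def inner_diff_right inner_sum_right)
  qed
  then have "z = x0"
    using apex by blast
  then show ?thesis
    unfolding z_def by (simp add: algebra_simps)
qed

text \<open>The coefficients of \<open>s \<bullet> y - k\<close> and \<open>a i \<bullet> y - l i\<close> below are the values of
  \<open>b \<bullet> y - m\<close> at the affine basis points \<open>x0\<close> and \<open>p i\<close>, divided by the values there of the
  functional vanishing at all other basis points.\<close>
lemma apex_affine_expansion:
  fixes x0 y b s :: "'a::real_inner" and a p :: "'i \<Rightarrow> 'a" and l :: "'i \<Rightarrow> real"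
  assumes "finite C"
    and apex: "\<And>y. (\<forall>i\<in>C. a i \<bullet> y = l i) \<longleftrightarrow> y = x0"
    and off: "\<And>i j. i \<in> C \<Longrightarrow> j \<in> C \<Longrightarrow> j \<noteq> i \<Longrightarrow> a j \<bullet> p i = l j"
    and diag: "\<And>i. i \<in> C \<Longrightarrow> a i \<bullet> p i \<noteq> l i"
    and base: "\<And>i. i \<in> C \<Longrightarrow> s \<bullet> p i = k" and "s \<bullet> x0 \<noteq> k"
  shows "b \<bullet> y - m = ((b \<bullet> x0 - m) / (s \<bullet> x0 - k)) * (s \<bullet> y - k)
      + (\<Sum>i\<in>C. ((b \<bullet> p i - m) / (a i \<bullet> p i - l i)) * (a i \<bullet> y - l i))"
proof -
  define t where "t i = (a i \<bullet> y - l i) / (a i \<bullet> p i - l i)" for i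
  have affine: "c \<bullet> y - e = (1 - sum t C) * (c \<bullet> x0 - e) + (\<Sum>i\<in>C. t i * (c \<bullet> p i - e))" for c e
  proof -
    have "c \<bullet> y = c \<bullet> (x0 + (\<Sum>i\<in>C. t i *\<^sub>R (p i - x0)))"
      using apex_coordinates[OF assms(1-4), of y] by (simp add: t_def)
    then have "c \<bullet> y = c \<bullet> x0 + (\<Sum>i\<in>C. t i * (c \<bullet> p i - c \<bullet> x0))"
      by (simp add: inner_add_right inner_sum_right inner_diff_right)
    then show ?thesis
      by (simp add: algebra_simps sum_subtractf sum_distrib_left sum_distrib_right)
  qed
  have "s \<bullet> y - k = (1 - sum t C) * (s \<bullet> x0 - k)"
    using affine[of s k] base by simp
  then have "1 - sum t C = (s \<bullet> y - k) / (s \<bullet> x0 - k)"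
    using \<open>s \<bullet> x0 \<noteq> k\<close> by (simp add: field_simps)
  then show ?thesis
    using affine[of b m] by (simp add: t_def mult.commute)
qed

lemma small_perturbation_strict_ineqs:
  fixes x0 w :: "'a::real_inner"
  assumes "finite I" "\<And>i. i \<in> I \<Longrightarrow> c i \<bullet> x0 < d i"
  obtains \<epsilon> where "\<epsilon> > 0" "\<And>i. i \<in> I \<Longrightarrow> c i \<bullet> (x0 + \<epsilon> *\<^sub>R w) < d i"
proof -
  have ev: "\<forall>\<^sub>F \<epsilon> in at_right 0. c i \<bullet> (x0 + \<epsilon> *\<^sub>R w) < d i" if "i \<in> I" for i
  proof (rule order_tendstoD(2))
    have "((\<lambda>\<epsilon>. c i \<bullet> x0 + \<epsilon> * (c i \<bullet> w)) \<longlongrightarrow> c i \<bullet> x0 + 0 * (c i \<bullet> w)) (at_right 0)"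
      by (intro tendsto_intros)
    then show "((\<lambda>\<epsilon>. c i \<bullet> (x0 + \<epsilon> *\<^sub>R w)) \<longlongrightarrow> c i \<bullet> x0) (at_right 0)"
      by (simp add: inner_add_right)
  qed (use assms(2) that in blast)
  have "\<forall>\<^sub>F \<epsilon> in at_right 0. \<forall>i\<in>I. c i \<bullet> (x0 + \<epsilon> *\<^sub>R w) < d i"
    using ev by (intro eventually_ball_finite[OF assms(1)] ballI)
  then have "\<forall>\<^sub>F \<epsilon> in at_right 0. \<epsilon> > 0 \<and> (\<forall>i\<in>I. c i \<bullet> (x0 + \<epsilon> *\<^sub>R w) < d i)"
    by (rule eventually_conj[OF eventually_at_right_less])
  moreover have "at_right (0::real) \<noteq> bot"
    by simp
  ultimately obtain \<epsilon> where "\<epsilon> > 0 \<and> (\<forall>i\<in>I. c i \<bullet> (x0 + \<epsilon> *\<^sub>R w) < d i)"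
    using eventually_happens' by blast
  then show thesis
    using that by blast
qed

section \<open>The configuration around the apex\<close>

locale facet_normals =
  fixes P :: "'a::euclidean_space set" and a :: "'a set \<Rightarrow> 'a" and l :: "'a set \<Rightarrow> real"
  assumes polytope: "polytope P" and full_dim: "aff_dim P = DIM('a)"
    and normal: "\<And>F. F facet_of P \<Longrightarrow> facet_ineq P F (a F) (l F)"
begin

lemma facet_ge: "F facet_of P \<Longrightarrow> x \<in> P \<Longrightarrow> a F \<bullet> x \<ge> l F"
  using normal by (auto simp: facet_ineq_def)

lemma Hyp_eq: "F facet_of P \<Longrightarrow> Hyp F = {x. a F \<bullet> x = l F}"
  using normal by (simp add: facet_ineq_def Hyp_def)

lemma on_facet: "F facet_of P \<Longrightarrow> x \<in> F \<Longrightarrow> a F \<bullet> x = l F"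
  using Hyp_eq[of F] hull_inc[of x F affine] unfolding Hyp_def by blast

lemma facet_not_nonneg_combination:
  assumes "finite \<K>" "\<And>K. K \<in> \<K> \<Longrightarrow> K facet_of P" "G facet_of P" "G \<notin> \<K>"
    and "\<And>K. K \<in> \<K> \<Longrightarrow> \<mu> K \<ge> 0"
    and comb: "\<And>y. a G \<bullet> y - l G = (\<Sum>K\<in>\<K>. \<mu> K * (a K \<bullet> y - l K))"
  shows False
proof (cases "\<exists>K\<in>\<K>. \<mu> K > 0")
  case True
  then obtain K where K: "K \<in> \<K>" "\<mu> K > 0"
    by blast
  have "a K \<bullet> y = l K" if "y \<in> G" for y
  proof -
    have "y \<in> P"
      using that assms(3) facet_of_imp_subset by blast
    then have nonneg: "\<And>K'. K' \<in> \<K> \<Longrightarrow> \<mu> K' * (a K' \<bullet> y - l K') \<ge> 0"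
      using assms(2,5) facet_ge by simp
    have "(\<Sum>K\<in>\<K>. \<mu> K * (a K \<bullet> y - l K)) = 0"
      using comb[of y] on_facet[OF assms(3) that] by simp
    then have "\<forall>K'\<in>\<K>. \<mu> K' * (a K' \<bullet> y - l K') = 0"
      using sum_nonneg_eq_0_iff[OF assms(1), of "\<lambda>K. \<mu> K * (a K \<bullet> y - l K)"] nonneg by blast
    then have "\<mu> K * (a K \<bullet> y - l K) = 0"
      using K(1) by blast
    then show ?thesis
      using K(2) by simp
  qed
  then have "G \<subseteq> affine hull K"
    using Hyp_eq[OF assms(2)[OF K(1)]] by (auto simp: Hyp_def)
  then have "G = K"
    using facet_subset_affine_hull_eq polytope_imp_convex[OF polytope] assms(2)[OF K(1)] assms(3)
    by blast
  with K(1) assms(4) show False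
    by blast
next
  case False
  then have "a G \<bullet> y = l G" for y
    using comb[of y] assms(5) by (simp add: le_less)
  then have "a G \<bullet> a G = 0"
    using \<open>a G \<bullet> 0 = l G\<close> by simp
  then show False
    using normal[OF assms(3)] by (simp add: facet_ineq_def)
qed

lemma bounded_position_apex:
  assumes "bounded_position P S" "S facet_of P" "\<A> \<subseteq> adj P S" "card \<A> = DIM('a)"
  obtains x0 where "\<And>y. (\<forall>F\<in>\<A>. a F \<bullet> y = l F) \<longleftrightarrow> y = x0" "a S \<bullet> x0 < l S"
proof -
  obtain x0 where x0: "(\<Inter>F\<in>\<A>. Hyp F) = {x0}" "x0 \<in> Hminus P S"
    using assms(1,3,4) unfolding bounded_position_def by blast
  have "Hyp F = {y. a F \<bullet> y = l F}" if "F \<in> \<A>" for F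
    using assms(3) that Hyp_eq by (auto simp: adj_def adjacent_facets_def)
  then have "(\<forall>F\<in>\<A>. a F \<bullet> y = l F) \<longleftrightarrow> y \<in> (\<Inter>F\<in>\<A>. Hyp F)" for y
    by simp
  then have "(\<forall>F\<in>\<A>. a F \<bullet> y = l F) \<longleftrightarrow> y = x0" for y
    using x0(1) by simp
  moreover have "a S \<bullet> x0 < l S"
    using x0(2) by (simp add: Hminus_eq[OF full_dim normal[OF assms(2)]])
  ultimately show thesis
    using that by blast
qed

end

lemma facet_normals_exist:
  fixes P :: "'a::euclidean_space set"
  assumes "polytope P" "aff_dim P = DIM('a)"
  shows "\<exists>a l. facet_normals P a l"
proof -
  have "\<forall>F. \<exists>a l. F facet_of P \<longrightarrow> facet_ineq P F a l"
    using facet_ineq_exists[OF polytope_imp_polyhedron[OF assms(1)] assms(2)] by metis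
  then obtain a l where "\<And>F. F facet_of P \<Longrightarrow> facet_ineq P F (a F) (l F)"
    by metis
  with assms show ?thesis
    by (blast intro: facet_normals.intro)
qed

text \<open>\<open>p F\<close> plays the vertex of \<open>S\<close> opposite to the ridge \<open>F \<inter> S\<close>, and \<open>x0\<close> the
  point beneath \<open>S\<close> where the hyperplanes of \<open>\<A>\<close> meet.\<close>
locale apex_configuration = facet_normals P a l
  for P :: "'a::euclidean_space set" and a l +
  fixes S :: "'a set" and \<A> :: "'a set set" and p :: "'a set \<Rightarrow> 'a" and x0 :: 'a
  assumes facet_S: "S facet_of P"
    and facets: "\<And>F. F \<in> \<A> \<Longrightarrow> F facet_of P" and S_notin: "S \<notin> \<A>"
    and p_in_S: "\<And>F. F \<in> \<A> \<Longrightarrow> p F \<in> S"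
    and p_in_others: "\<And>F F'. F \<in> \<A> \<Longrightarrow> F' \<in> \<A> \<Longrightarrow> F' \<noteq> F \<Longrightarrow> p F \<in> F'"
    and apex: "\<And>y. (\<forall>F\<in>\<A>. a F \<bullet> y = l F) \<longleftrightarrow> y = x0"
    and apex_beyond_S: "a S \<bullet> x0 < l S"
begin

lemma finite_A: "finite \<A>"
proof (rule finite_subset)
  show "\<A> \<subseteq> {F. F facet_of P}"
    using facets by blast
qed (rule finite_polytope_facets[OF polytope])

lemma p_on_S: "F \<in> \<A> \<Longrightarrow> a S \<bullet> p F = l S"
  by (simp add: on_facet facet_S p_in_S)

lemma p_on_others: "F \<in> \<A> \<Longrightarrow> F' \<in> \<A> \<Longrightarrow> F' \<noteq> F \<Longrightarrow> a F' \<bullet> p F = l F'"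
  by (simp add: on_facet facets p_in_others)

lemma apex_on: "F \<in> \<A> \<Longrightarrow> a F \<bullet> x0 = l F"
  using apex by blast

lemma p_beyond: "F \<in> \<A> \<Longrightarrow> a F \<bullet> p F > l F"
proof -
  assume F: "F \<in> \<A>"
  have "p F \<in> P"
    using p_in_S[OF F] facet_of_imp_subset[OF facet_S] by blast
  then have "a F \<bullet> p F \<ge> l F"
    using facet_ge[OF facets[OF F]] by blast
  moreover have "a F \<bullet> p F \<noteq> l F"
  proof
    assume "a F \<bullet> p F = l F"
    then have "\<forall>F'\<in>\<A>. a F' \<bullet> p F = l F'"
      using p_on_others[OF F] by (metis (full_types))
    then have "p F = x0"
      using apex by blast
    then show False
      using p_on_S[OF F] apex_beyond_S by simp
  qed
  ultimately show ?thesis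
    by simp
qed

lemma affine_expansion:
  "b \<bullet> y - m = ((b \<bullet> x0 - m) / (a S \<bullet> x0 - l S)) * (a S \<bullet> y - l S)
     + (\<Sum>F\<in>\<A>. ((b \<bullet> p F - m) / (a F \<bullet> p F - l F)) * (a F \<bullet> y - l F))"
proof (rule apex_affine_expansion[OF finite_A apex p_on_others _ p_on_S])
  show "\<And>F. F \<in> \<A> \<Longrightarrow> a F \<bullet> p F \<noteq> l F"
    using p_beyond by force
  show "a S \<bullet> x0 \<noteq> l S"
    using apex_beyond_S by simp
qed

lemma other_facet_beyond_apex:
  assumes G: "G facet_of P" "G \<noteq> S" "G \<notin> \<A>"
  shows "a G \<bullet> x0 > l G"
proof (rule ccontr)
  assume below: "\<not> ?thesis"
  define \<mu> where "\<mu> K = (if K = S then (a G \<bullet> x0 - l G) / (a S \<bullet> x0 - l S)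
    else (a G \<bullet> p K - l G) / (a K \<bullet> p K - l K))" for K
  have "\<mu> S \<ge> 0"
    using below apex_beyond_S by (simp add: \<mu>_def divide_nonpos_neg)
  moreover have "\<mu> F \<ge> 0" if F: "F \<in> \<A>" for F
  proof -
    have "p F \<in> P"
      using p_in_S[OF F] facet_of_imp_subset[OF facet_S] by blast
    then have "a G \<bullet> p F - l G \<ge> 0"
      using facet_ge[OF G(1)] by simp
    moreover have "a F \<bullet> p F - l F > 0"
      using p_beyond[OF F] by simp
    ultimately show ?thesis
      using F S_notin by (auto simp: \<mu>_def)
  qed
  ultimately have "\<mu> K \<ge> 0" if "K \<in> insert S \<A>" for K
    using that by blast
  moreover have "a G \<bullet> y - l G = (\<Sum>K\<in>insert S \<A>. \<mu> K * (a K \<bullet> y - l K))" for y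
  proof -
    have "(\<Sum>F\<in>\<A>. ((a G \<bullet> p F - l G) / (a F \<bullet> p F - l F)) * (a F \<bullet> y - l F))
        = (\<Sum>F\<in>\<A>. \<mu> F * (a F \<bullet> y - l F))"
      using S_notin by (intro sum.cong) (auto simp: \<mu>_def)
    then show ?thesis
      using affine_expansion[of "a G" y "l G"] finite_A S_notin by (simp add: \<mu>_def)
  qed
  ultimately show False
    using facet_S facets G by (intro facet_not_nonneg_combination[of "insert S \<A>" G \<mu>]) (auto simp: finite_A)
qed

lemma facet_through_opposite_vertices:
  assumes G: "G facet_of P" "G \<noteq> S" and F: "F \<in> \<A>"
    and through: "\<And>F'. F' \<in> \<A> \<Longrightarrow> F' \<noteq> F \<Longrightarrow> p F' \<in> G"
  shows "G = F"
proof (rule ccontr)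
  assume "G \<noteq> F"
  then have "G \<notin> \<A>"
    using through[of G] on_facet[OF G(1)] p_beyond by force
  then have G_x0: "a G \<bullet> x0 > l G"
    using other_facet_beyond_apex G by blast
  have "\<not> F \<subseteq> affine hull S"
    using facet_subset_affine_hull_eq[OF polytope_imp_convex[OF polytope] facet_S facets[OF F]]
      F S_notin by blast
  then obtain y where y: "y \<in> F" "y \<notin> affine hull S"
    by blast
  then have "y \<in> P"
    using facets[OF F] facet_of_imp_subset by blast
  then have S_y: "a S \<bullet> y > l S"
    using facet_ge[OF facet_S] y(2) Hyp_eq[OF facet_S] by (force simp: Hyp_def)
  \<comment> \<open>on \<open>F\<close> the expansion of \<open>G\<close>'s functional is a negative multiple of that of \<open>S\<close>\<close>
  have "(\<Sum>F'\<in>\<A>. ((a G \<bullet> p F' - l G) / (a F' \<bullet> p F' - l F')) * (a F' \<bullet> y - l F')) = 0"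
    using on_facet[OF facets[OF F] y(1)] on_facet[OF G(1) through] by (intro sum.neutral) force
  then have "a G \<bullet> y - l G = ((a G \<bullet> x0 - l G) / (a S \<bullet> x0 - l S)) * (a S \<bullet> y - l S)"
    using affine_expansion[of "a G" y "l G"] by simp
  also have "\<dots> < 0"
    using G_x0 S_y apex_beyond_S by (intro mult_neg_pos divide_pos_neg) simp_all
  finally show False
    using facet_ge[OF G(1) \<open>y \<in> P\<close>] by simp
qed

lemma adj_eq_A:
  assumes "\<A> \<subseteq> adj P S" and opposite: "\<And>G. G \<in> adj P S \<Longrightarrow> \<exists>F\<in>\<A>. \<forall>F'\<in>\<A> - {F}. p F' \<in> G"
  shows "adj P S = \<A>"
proof -
  have "G \<in> \<A>" if G: "G \<in> adj P S" for G
  proof -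
    obtain F where "F \<in> \<A>" "\<forall>F'\<in>\<A> - {F}. p F' \<in> G"
      using opposite[OF G] by blast
    then have "G = F"
      using facet_through_opposite_vertices adj_facetD[OF G] by blast
    with \<open>F \<in> \<A>\<close> show ?thesis
      by simp
  qed
  with assms(1) show ?thesis
    by blast
qed

lemma direction_with_prescribed_values: "\<exists>W. \<forall>F\<in>\<A>. a F \<bullet> W = \<sigma> F"
proof -
  define W where "W = (\<Sum>F\<in>\<A>. (\<sigma> F / (a F \<bullet> p F - l F)) *\<^sub>R (p F - x0))"
  have "a F \<bullet> W = \<sigma> F" if F: "F \<in> \<A>" for F
  proof -
    have "(\<sigma> F' / (a F' \<bullet> p F' - l F')) * (a F \<bullet> (p F' - x0)) = (if F' = F then \<sigma> F else 0)"
      if "F' \<in> \<A>" for F'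
      using p_on_others[OF that F] p_beyond[OF F] apex_on[OF F] by (auto simp: inner_diff_right)
    then show ?thesis
      using F finite_A by (simp add: W_def inner_sum_right cong: sum.cong)
  qed
  then show ?thesis
    by blast
qed

lemma point_with_prescribed_signs:
  obtains \<epsilon> x where "\<epsilon> > 0" "\<And>F. F \<in> \<A> \<Longrightarrow> a F \<bullet> x - l F = \<epsilon> * \<sigma> F" "a S \<bullet> x < l S"
    "\<And>G. G facet_of P \<Longrightarrow> G \<notin> \<A> \<Longrightarrow> G \<noteq> S \<Longrightarrow> a G \<bullet> x > l G"
proof -
  obtain W where W: "\<And>F. F \<in> \<A> \<Longrightarrow> a F \<bullet> W = \<sigma> F"
    using direction_with_prescribed_values by blast
  define I where "I = {G. G facet_of P \<and> G \<notin> \<A>}"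
  \<comment> \<open>the strict inequalities at \<open>x0\<close> outside \<open>\<A>\<close>, with the one for \<open>S\<close> reversed\<close>
  define c where "c G = (if G = S then a S else - a G)" for G
  define d where "d G = (if G = S then l S else - l G)" for G
  have "finite I"
    using finite_polytope_facets[OF polytope] by (simp add: I_def)
  moreover have "c G \<bullet> x0 < d G" if "G \<in> I" for G
    using that apex_beyond_S other_facet_beyond_apex by (auto simp: I_def c_def d_def)
  ultimately obtain \<epsilon> where "\<epsilon> > 0" and \<epsilon>: "\<And>G. G \<in> I \<Longrightarrow> c G \<bullet> (x0 + \<epsilon> *\<^sub>R W) < d G"
    using small_perturbation_strict_ineqs[of I c x0 d W] by blast
  show thesis
  proof (rule that[of \<epsilon> "x0 + \<epsilon> *\<^sub>R W"])
    show "a F \<bullet> (x0 + \<epsilon> *\<^sub>R W) - l F = \<epsilon> * \<sigma> F" if "F \<in> \<A>" for F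
      using W[OF that] apex_on[OF that] by (simp add: inner_add_right)
    show "a S \<bullet> (x0 + \<epsilon> *\<^sub>R W) < l S"
      using \<epsilon>[of S] facet_S S_notin by (simp add: I_def c_def d_def)
    show "a G \<bullet> (x0 + \<epsilon> *\<^sub>R W) > l G" if "G facet_of P" "G \<notin> \<A>" "G \<noteq> S" for G
      using \<epsilon>[of G] that by (simp add: I_def c_def d_def)
  qed (rule \<open>\<epsilon> > 0\<close>)
qed

lemma V_S_nonempty:
  assumes "\<F> \<subseteq> \<A>" "\<N> \<subseteq> \<A>" "\<F> \<inter> \<N> = {}"
  shows "V_S S \<F> \<N> P \<noteq> {}"
proof -
  define \<sigma> where "\<sigma> F = (if F \<in> \<F> then 0 else if F \<in> \<N> then -1 else 1 :: real)" for F
  obtain \<epsilon> x where "\<epsilon> > 0" and on_A: "\<And>F. F \<in> \<A> \<Longrightarrow> a F \<bullet> x - l F = \<epsilon> * \<sigma> F"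
    and "a S \<bullet> x < l S" and off_A: "\<And>G. G facet_of P \<Longrightarrow> G \<notin> \<A> \<Longrightarrow> G \<noteq> S \<Longrightarrow> a G \<bullet> x > l G"
    using point_with_prescribed_signs[where \<sigma> = \<sigma>] by blast
  have "x \<in> V_S S \<F> \<N> P"
    unfolding V_S_def
  proof (intro CollectI conjI ballI allI impI)
    fix F assume "F \<in> \<N> \<union> {S}"
    then consider "F = S" | "F \<in> \<A>" "F \<in> \<N>" "F \<notin> \<F>"
      using assms(2,3) by blast
    then show "x \<in> Hminus P F"
    proof cases
      case 1
      then show ?thesis
        using \<open>a S \<bullet> x < l S\<close> facet_S by (simp add: Hminus_eq[OF full_dim normal])
    next
      case 2
      then show ?thesis
        using on_A[of F] \<open>\<epsilon> > 0\<close> facets[of F] by (simp add: Hminus_eq[OF full_dim normal] \<sigma>_def)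
    qed
  next
    fix F assume "F \<in> \<F>"
    then have "F \<in> \<A>"
      using assms(1) by blast
    with \<open>F \<in> \<F>\<close> show "x \<in> Hyp F"
      using on_A[of F] facets[of F] by (simp add: Hyp_eq \<sigma>_def)
  next
    fix F assume F: "F facet_of P \<and> F \<notin> \<N> \<union> {S} \<union> \<F>"
    then have "a F \<bullet> x > l F"
      using on_A[of F] off_A[of F] \<open>\<epsilon> > 0\<close> by (cases "F \<in> \<A>") (auto simp: \<sigma>_def)
    with F show "x \<in> Hplus P F"
      by (simp add: Hplus_eq[OF full_dim normal])
  qed
  then show ?thesis
    by blast
qed

end

theorem lemma2p8:
  fixes P S :: "'a::euclidean_space set" and \<F> \<N> :: "'a set set"
  assumes "polytope P" and "aff_dim P = int DIM('a)"
    and "simplex_facet P S" and "bounded_position P S"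
    and "\<F> \<subseteq> adj P S" and "\<N> \<subseteq> adj P S" and "\<F> \<inter> \<N> = {}"
  shows "V_S S \<F> \<N> P \<noteq> {}"
proof -
  have S: "S facet_of P"
    using assms(3) by (simp add: simplex_facet_def)
  obtain a l where "facet_normals P a l"
    using facet_normals_exist[OF assms(1,2)] by blast
  then interpret facet_normals P a l .
  obtain \<A> p where \<A>: "\<A> \<subseteq> adj P S" "card \<A> = DIM('a)"
    and p: "\<And>F. F \<in> \<A> \<Longrightarrow> p F \<in> S" "\<And>F F'. F \<in> \<A> \<Longrightarrow> F' \<in> \<A> \<Longrightarrow> F' \<noteq> F \<Longrightarrow> p F \<in> F'"
    and opposite: "\<And>G. G \<in> adj P S \<Longrightarrow> \<exists>F\<in>\<A>. \<forall>F'\<in>\<A> - {F}. p F' \<in> G"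
    using simplex_facet_opposite_vertices[OF assms(1,3)] by blast
  obtain x0 where x0: "\<And>y. (\<forall>F\<in>\<A>. a F \<bullet> y = l F) \<longleftrightarrow> y = x0" "a S \<bullet> x0 < l S"
    using bounded_position_apex[OF assms(4) S \<A>] by blast
  interpret apex_configuration P a l S \<A> p x0
  proof
    show "F facet_of P" if "F \<in> \<A>" for F
      using adj_facetD \<A>(1) that by blast
    show "S \<notin> \<A>"
      using adj_facetD \<A>(1) by blast
  qed (fact S p x0)+
  have "adj P S = \<A>"
    using adj_eq_A \<A>(1) opposite by blast
  with assms(5-7) show ?thesis
    using V_S_nonempty by simp
qed

end
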